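(* Let $R$ be a commutative ring with identity and $M$ a non-zero comultiplication $R$-module. If $G'(M)$ is non-null and connected, then $G'(M)$ has no cut vertex, i.e. there is no vertex $N$ such that $G'(M)$ with $N$ removed is disconnected.
   Context: An $R$-module $M$ is a comultiplication module if for every submodule $N$ of $M$ there is an ideal $I$ of $R$ with $N=\mathrm{Ann}_M(I)$. A submodule $N$ of $M$ is large if $N\cap L\neq 0$ for every non-zero submodule $L$ of $M$. The large sum graph $G'(M)$ has as vertex set the set of all non-zero non-large submodules of $M$, and two distinct vertices $N,K$ are adjacent iff $N+K$ is non-large in $M$. *)

theory Defs
  imports "HOL-Algebra.Module" "HOL-Algebra.Ideal" "HOL-Algebra.AbelCoset"
begin

definition ann_mod :: "('a, 'c) ring_scheme \<Rightarrow> ('a, 'b, 'd) module_scheme \<Rightarrow> 'a set \<Rightarrow> 'b set" where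
  "ann_mod R M I = {m \<in> carrier M. \<forall>r \<in> I. r \<odot>\<^bsub>M\<^esub> m = \<zero>\<^bsub>M\<^esub>}"

definition comultiplication_module :: "('a, 'c) ring_scheme \<Rightarrow> ('a, 'b, 'd) module_scheme \<Rightarrow> bool" where
  "comultiplication_module R M \<longleftrightarrow>
     (\<forall>N. submodule N R M \<longrightarrow> (\<exists>I. ideal I R \<and> N = ann_mod R M I))"

definition large_submodule :: "('a, 'c) ring_scheme \<Rightarrow> ('a, 'b, 'd) module_scheme \<Rightarrow> 'b set \<Rightarrow> bool" where
  "large_submodule R M N \<longleftrightarrow> submodule N R M \<and>
     (\<forall>L. submodule L R M \<and> L \<noteq> {\<zero>\<^bsub>M\<^esub>} \<longrightarrow> N \<inter> L \<noteq> {\<zero>\<^bsub>M\<^esub>})"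

text \<open>The large sum graph G'(M): vertex set and adjacency relation.\<close>
definition lsg_vertices :: "('a, 'c) ring_scheme \<Rightarrow> ('a, 'b, 'd) module_scheme \<Rightarrow> 'b set set" where
  "lsg_vertices R M = {N. submodule N R M \<and> N \<noteq> {\<zero>\<^bsub>M\<^esub>} \<and> \<not> large_submodule R M N}"

definition lsg_adj :: "('a, 'c) ring_scheme \<Rightarrow> ('a, 'b, 'd) module_scheme \<Rightarrow> 'b set \<Rightarrow> 'b set \<Rightarrow> bool" where
  "lsg_adj R M N K \<longleftrightarrow> N \<in> lsg_vertices R M \<and> K \<in> lsg_vertices R M \<and> N \<noteq> K \<and>
     \<not> large_submodule R M (N <+>\<^bsub>M\<^esub> K)"

definition graph_reachable :: "'v set \<Rightarrow> ('v \<Rightarrow> 'v \<Rightarrow> bool) \<Rightarrow> 'v \<Rightarrow> 'v \<Rightarrow> bool" where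
  "graph_reachable V E x y \<longleftrightarrow> (\<lambda>a b. a \<in> V \<and> b \<in> V \<and> E a b)\<^sup>*\<^sup>* x y"

definition graph_connected :: "'v set \<Rightarrow> ('v \<Rightarrow> 'v \<Rightarrow> bool) \<Rightarrow> bool" where
  "graph_connected V E \<longleftrightarrow> (\<forall>x \<in> V. \<forall>y \<in> V. graph_reachable V E x y)"

definition graph_nonnull :: "'v set \<Rightarrow> ('v \<Rightarrow> 'v \<Rightarrow> bool) \<Rightarrow> bool" where
  "graph_nonnull V E \<longleftrightarrow> (\<exists>x \<in> V. \<exists>y \<in> V. E x y)"

definition graph_cut_vertex :: "'v set \<Rightarrow> ('v \<Rightarrow> 'v \<Rightarrow> bool) \<Rightarrow> 'v \<Rightarrow> bool" where
  "graph_cut_vertex V E v \<longleftrightarrow> v \<in> V \<and> \<not> graph_connected (V - {v}) E"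

end

theory Submission imports Defs begin

text \<open>
  If a vertex \<open>v\<close> of \<open>G'(M)\<close> is adjacent to \<open>a\<close> and \<open>b\<close>, choose nonzero submodules \<open>L\<close>, \<open>L'\<close>
  with \<open>L \<inter> (a + v) = 0\<close> and \<open>L' \<inter> (v + b) = 0\<close>. In a comultiplication module a nonzero submodule
  meeting two submodules trivially also meets their sum trivially, since one summand is an
  annihilator \<open>Ann\<^sub>M(I)\<close> and \<open>I\<close> pushes the sum into the other summand. Hence either \<open>L\<close> or \<open>L'\<close>
  witnesses that \<open>a + b\<close> is not large, or \<open>a \<inter> L'\<close>, \<open>b \<inter> L\<close> are vertices and
  \<open>a \<dash> a \<inter> L' \<dash> b \<inter> L \<dash> b\<close> is a path avoiding \<open>v\<close>, the middle edge being witnessed by \<open>v\<close> itself.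
  So every path through \<open>v\<close> can be rerouted around \<open>v\<close>, and removing \<open>v\<close> keeps the graph connected.
\<close>

context module
begin

lemma submodule_zero: "submodule N R M \<Longrightarrow> \<zero>\<^bsub>M\<^esub> \<in> N"
  using submodule.axioms(1) subgroup.one_closed by fastforce

lemma submodule_Int:
  assumes "submodule X R M" "submodule Y R M"
  shows "submodule (X \<inter> Y) R M"
  by (rule submoduleI)
    (use submoduleE[OF assms(1)] submoduleE[OF assms(2)] submodule_zero[OF assms(1)]
       submodule_zero[OF assms(2)] in auto)

lemma mem_set_add_iff: "y \<in> X <+>\<^bsub>M\<^esub> Y \<longleftrightarrow> (\<exists>h\<in>X. \<exists>k\<in>Y. y = h \<oplus>\<^bsub>M\<^esub> k)"
  unfolding set_add_def' by blast

lemma submodule_set_add: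
  assumes X: "submodule X R M" and Y: "submodule Y R M"
  shows "submodule (X <+>\<^bsub>M\<^esub> Y) R M"
proof (rule submodule.intro)
  show "subgroup (X <+>\<^bsub>M\<^esub> Y) (add_monoid M)"
    unfolding set_add_def using X Y by (intro add.mult_subgroups) (auto dest: submodule.axioms(1))
  show "submodule_axioms (X <+>\<^bsub>M\<^esub> Y) R M"
  proof
    fix r x assume r: "r \<in> carrier R" and "x \<in> X <+>\<^bsub>M\<^esub> Y"
    then obtain h k where hk: "h \<in> X" "k \<in> Y" "x = h \<oplus>\<^bsub>M\<^esub> k"
      unfolding mem_set_add_iff by blast
    then have "r \<odot>\<^bsub>M\<^esub> x = r \<odot>\<^bsub>M\<^esub> h \<oplus>\<^bsub>M\<^esub> r \<odot>\<^bsub>M\<^esub> k"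
      using r submoduleE(1)[OF X] submoduleE(1)[OF Y] smult_r_distr by blast
    then show "r \<odot>\<^bsub>M\<^esub> x \<in> X <+>\<^bsub>M\<^esub> Y"
      unfolding mem_set_add_iff using hk r submoduleE(4)[OF X] submoduleE(4)[OF Y] by blast
  qed
qed

lemma set_add_submodule_upper:
  assumes X: "submodule X R M" and Y: "submodule Y R M"
  shows "X \<subseteq> X <+>\<^bsub>M\<^esub> Y" and "Y \<subseteq> X <+>\<^bsub>M\<^esub> Y"
proof -
  show "X \<subseteq> X <+>\<^bsub>M\<^esub> Y"
  proof
    fix x assume x: "x \<in> X"
    then have "x = x \<oplus>\<^bsub>M\<^esub> \<zero>\<^bsub>M\<^esub>" using submoduleE(1)[OF X] by auto
    then show "x \<in> X <+>\<^bsub>M\<^esub> Y" unfolding mem_set_add_iff using x submodule_zero[OF Y] by blast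
  qed
  show "Y \<subseteq> X <+>\<^bsub>M\<^esub> Y"
  proof
    fix y assume y: "y \<in> Y"
    then have "y = \<zero>\<^bsub>M\<^esub> \<oplus>\<^bsub>M\<^esub> y" using submoduleE(1)[OF Y] by auto
    then show "y \<in> X <+>\<^bsub>M\<^esub> Y" unfolding mem_set_add_iff using y submodule_zero[OF X] by blast
  qed
qed

lemma set_add_commute:
  assumes "X \<subseteq> carrier M" "Y \<subseteq> carrier M"
  shows "X <+>\<^bsub>M\<^esub> Y = Y <+>\<^bsub>M\<^esub> X"
  unfolding set_add_def' using assms by (auto intro: a_comm) (metis a_comm subsetD)+

lemma set_add_submodule_absorb:
  assumes X: "submodule X R M" and Y: "submodule Y R M" and "Y \<subseteq> X"
  shows "X <+>\<^bsub>M\<^esub> Y = X"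
proof
  show "X <+>\<^bsub>M\<^esub> Y \<subseteq> X"
    unfolding mem_set_add_iff subset_iff using assms(3) submoduleE(5)[OF X] by blast
  show "X \<subseteq> X <+>\<^bsub>M\<^esub> Y" by (rule set_add_submodule_upper(1)[OF X Y])
qed

lemma Int_trivial_subset:
  assumes "submodule X R M" "submodule L R M" "X \<subseteq> Y" "L \<inter> Y = {\<zero>\<^bsub>M\<^esub>}"
  shows "L \<inter> X = {\<zero>\<^bsub>M\<^esub>}"
  using assms submodule_zero by blast

lemma not_large_submodule_iff:
  assumes "submodule N R M"
  shows "\<not> large_submodule R M N \<longleftrightarrow>
    (\<exists>L. submodule L R M \<and> L \<noteq> {\<zero>\<^bsub>M\<^esub>} \<and> N \<inter> L = {\<zero>\<^bsub>M\<^esub>})"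
  using assms unfolding large_submodule_def by blast

lemma large_submodule_mono:
  assumes "large_submodule R M X" "submodule Y R M" "X \<subseteq> Y"
  shows "large_submodule R M Y"
  using assms submodule_zero unfolding large_submodule_def by blast

lemma ann_mod_Int_set_add_trivial:
  assumes I: "I \<subseteq> carrier R"
    and L: "submodule L R M" and A: "submodule (ann_mod R M I) R M" and X: "submodule X R M"
    and LA: "L \<inter> ann_mod R M I = {\<zero>\<^bsub>M\<^esub>}" and LX: "L \<inter> X = {\<zero>\<^bsub>M\<^esub>}"
  shows "L \<inter> (ann_mod R M I <+>\<^bsub>M\<^esub> X) = {\<zero>\<^bsub>M\<^esub>}"
proof -
  have "y \<in> ann_mod R M I" if y: "y \<in> L" "y \<in> ann_mod R M I <+>\<^bsub>M\<^esub> X" for y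
  proof -
    obtain h k where hk: "h \<in> ann_mod R M I" "k \<in> X" "y = h \<oplus>\<^bsub>M\<^esub> k"
      using y(2) unfolding mem_set_add_iff by blast
    have "r \<odot>\<^bsub>M\<^esub> y = \<zero>\<^bsub>M\<^esub>" if r: "r \<in> I" for r
    proof -
      have "r \<odot>\<^bsub>M\<^esub> y = r \<odot>\<^bsub>M\<^esub> h \<oplus>\<^bsub>M\<^esub> r \<odot>\<^bsub>M\<^esub> k"
        using hk r I submoduleE(1)[OF A] submoduleE(1)[OF X] smult_r_distr by blast
      also have "\<dots> = r \<odot>\<^bsub>M\<^esub> k"
      proof -
        have "r \<odot>\<^bsub>M\<^esub> k \<in> carrier M" using hk(2) r I submoduleE(1)[OF X] by auto
        then show ?thesis using hk(1) r unfolding ann_mod_def by auto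
      qed
      finally have "r \<odot>\<^bsub>M\<^esub> y \<in> X" using hk(2) r I submoduleE(4)[OF X] by auto
      moreover have "r \<odot>\<^bsub>M\<^esub> y \<in> L" using y(1) r I submoduleE(4)[OF L] by blast
      ultimately show ?thesis using LX by blast
    qed
    then show ?thesis using y(1) submoduleE(1)[OF L] unfolding ann_mod_def by blast
  qed
  then show ?thesis
    using LA submodule_zero[OF L] submodule_zero[OF submodule_set_add[OF A X]] by blast
qed

lemma comultiplication_set_add_not_large:
  assumes cm: "comultiplication_module R M"
    and N: "submodule N R M" and K: "submodule K R M"
    and L: "submodule L R M" "L \<noteq> {\<zero>\<^bsub>M\<^esub>}" "L \<inter> N = {\<zero>\<^bsub>M\<^esub>}" "L \<inter> K = {\<zero>\<^bsub>M\<^esub>}"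
  shows "\<not> large_submodule R M (N <+>\<^bsub>M\<^esub> K)"
proof -
  obtain I where I: "ideal I R" and N_ann: "N = ann_mod R M I"
    using cm N unfolding comultiplication_module_def by blast
  have "I \<subseteq> carrier R" using I ideal.axioms(1) additive_subgroup.a_subset by blast
  then have "L \<inter> (N <+>\<^bsub>M\<^esub> K) = {\<zero>\<^bsub>M\<^esub>}"
    using ann_mod_Int_set_add_trivial L N K unfolding N_ann by blast
  then show ?thesis
    using L(1,2) submodule_set_add[OF N K] not_large_submodule_iff by blast
qed

end

lemma graph_reachable_trans:
  "graph_reachable V E x y \<Longrightarrow> graph_reachable V E y z \<Longrightarrow> graph_reachable V E x z"
  unfolding graph_reachable_def by simp

lemma graph_reachable_if_eq_or_edge:
  "x \<in> V \<Longrightarrow> y \<in> V \<Longrightarrow> x = y \<or> E x y \<Longrightarrow> graph_reachable V E x y"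
  unfolding graph_reachable_def by auto

lemma graph_connected_Diff_singleton:
  assumes conn: "graph_connected V E"
    and bypass: "\<And>a b. a \<in> V - {v} \<Longrightarrow> b \<in> V - {v} \<Longrightarrow> E a v \<Longrightarrow> E v b \<Longrightarrow>
      graph_reachable (V - {v}) E a b"
  shows "graph_connected (V - {v}) E"
  unfolding graph_connected_def
proof (intro ballI)
  let ?R = "graph_reachable (V - {v}) E"
  fix x y assume x: "x \<in> V - {v}" and y: "y \<in> V - {v}"
  \<comment> \<open>Along a walk from \<open>x\<close> in \<open>V\<close>, remember the last vertex before each visit to \<open>v\<close>.\<close>
  have "(z \<noteq> v \<longrightarrow> ?R x z) \<and> (z = v \<longrightarrow> (\<exists>w \<in> V - {v}. ?R x w \<and> E w v))"
    if "(\<lambda>a b. a \<in> V \<and> b \<in> V \<and> E a b)\<^sup>*\<^sup>* x z" for z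
    using that
  proof (induction rule: rtranclp_induct)
    case base
    show ?case using x by (simp add: graph_reachable_def)
  next
    case (step z z')
    then have z: "z \<in> V" and z': "z' \<in> V" and E: "E z z'" by auto
    show ?case
    proof (cases "z = v")
      case True
      then obtain w where w: "w \<in> V - {v}" "?R x w" "E w v" using step.IH by blast
      show ?thesis
      proof (cases "z' = v")
        case True
        then show ?thesis using w by blast
      next
        case False
        then have "?R w z'" using bypass[OF w(1) _ w(3)] E \<open>z = v\<close> z' by simp
        then show ?thesis using graph_reachable_trans[OF w(2)] False by blast
      qed
    next
      case False
      then have xz: "?R x z" using step.IH by blast
      show ?thesis
      proof (cases "z' = v")
        case True
        then show ?thesis using xz E z \<open>z \<noteq> v\<close> by blast
      next
        case False
        then have "?R z z'" using z z' E \<open>z \<noteq> v\<close> by (intro graph_reachable_if_eq_or_edge) auto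
        then show ?thesis using graph_reachable_trans[OF xz] False by blast
      qed
    qed
  qed
  moreover have "(\<lambda>a b. a \<in> V \<and> b \<in> V \<and> E a b)\<^sup>*\<^sup>* x y"
    using conn x y unfolding graph_connected_def graph_reachable_def by blast
  ultimately show "?R x y" using y by blast
qed

context module
begin

lemma lsg_reachable_if_set_add_not_large:
  assumes "N \<in> lsg_vertices R M - {v}" "K \<in> lsg_vertices R M - {v}"
    and "\<not> large_submodule R M (N <+>\<^bsub>M\<^esub> K)"
  shows "graph_reachable (lsg_vertices R M - {v}) (lsg_adj R M) N K"
  using assms by (intro graph_reachable_if_eq_or_edge) (auto simp: lsg_adj_def)

lemma Int_mem_lsg_vertices:
  assumes "N \<in> lsg_vertices R M" "submodule L R M" "N \<inter> L \<noteq> {\<zero>\<^bsub>M\<^esub>}"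
  shows "N \<inter> L \<in> lsg_vertices R M"
  using assms submodule_Int large_submodule_mono[of "N \<inter> L" N]
  unfolding lsg_vertices_def by blast

lemma lsg_bypass:
  assumes cm: "comultiplication_module R M"
    and a: "a \<in> lsg_vertices R M - {v}" and b: "b \<in> lsg_vertices R M - {v}"
    and av: "lsg_adj R M a v" and vb: "lsg_adj R M v b"
  shows "graph_reachable (lsg_vertices R M - {v}) (lsg_adj R M) a b"
proof -
  let ?V = "lsg_vertices R M" and ?O = "{\<zero>\<^bsub>M\<^esub>}"
  have sa: "submodule a R M" and sb: "submodule b R M" and sv: "submodule v R M"
    and v0: "v \<noteq> ?O" and anl: "\<not> large_submodule R M a" and bnl: "\<not> large_submodule R M b"
    using av vb unfolding lsg_adj_def lsg_vertices_def by auto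
  obtain L where L: "submodule L R M" "L \<noteq> ?O" and L_av: "L \<inter> (a <+>\<^bsub>M\<^esub> v) = ?O"
    using av submodule_set_add[OF sa sv] not_large_submodule_iff unfolding lsg_adj_def by blast
  obtain L' where L': "submodule L' R M" "L' \<noteq> ?O" and L'_vb: "L' \<inter> (v <+>\<^bsub>M\<^esub> b) = ?O"
    using vb submodule_set_add[OF sv sb] not_large_submodule_iff unfolding lsg_adj_def by blast
  have La: "L \<inter> a = ?O"
    using Int_trivial_subset[OF sa L(1) set_add_submodule_upper(1)[OF sa sv] L_av] .
  have Lv: "L \<inter> v = ?O"
    using Int_trivial_subset[OF sv L(1) set_add_submodule_upper(2)[OF sa sv] L_av] .
  have L'v: "L' \<inter> v = ?O"
    using Int_trivial_subset[OF sv L'(1) set_add_submodule_upper(1)[OF sv sb] L'_vb] .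
  have L'b: "L' \<inter> b = ?O"
    using Int_trivial_subset[OF sb L'(1) set_add_submodule_upper(2)[OF sv sb] L'_vb] .
  consider "b \<inter> L = ?O" | "a \<inter> L' = ?O" | "b \<inter> L \<noteq> ?O" "a \<inter> L' \<noteq> ?O" by blast
  then show ?thesis
  proof cases
    case 1
    then show ?thesis
      using comultiplication_set_add_not_large[OF cm sa sb L] La
      by (intro lsg_reachable_if_set_add_not_large[OF a b]) blast
  next
    case 2
    then show ?thesis
      using comultiplication_set_add_not_large[OF cm sa sb L'] L'b
      by (intro lsg_reachable_if_set_add_not_large[OF a b]) blast
  next
    case 3
    define c where "c = b \<inter> L"
    define d where "d = a \<inter> L'"
    have sc: "submodule c R M" and sd: "submodule d R M"
      unfolding c_def d_def using submodule_Int sa sb L(1) L'(1) by blast+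
    have vc: "v \<inter> c = ?O"
      using Lv submodule_zero[OF sv] submodule_zero[OF sc] unfolding c_def by blast
    have vd: "v \<inter> d = ?O"
      using L'v submodule_zero[OF sv] submodule_zero[OF sd] unfolding d_def by blast
    have "c \<in> ?V" and "d \<in> ?V"
      unfolding c_def d_def using Int_mem_lsg_vertices a b L(1) L'(1) 3 by blast+
    moreover have "c \<noteq> v" and "d \<noteq> v" using vc vd v0 by auto
    ultimately have c: "c \<in> ?V - {v}" and d: "d \<in> ?V - {v}" by blast+
    have "a <+>\<^bsub>M\<^esub> d = a"
      by (rule set_add_submodule_absorb[OF sa sd]) (simp add: d_def)
    then have ad: "graph_reachable (?V - {v}) (lsg_adj R M) a d"
      by (intro lsg_reachable_if_set_add_not_large[OF a d]) (simp add: anl)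
    have "c <+>\<^bsub>M\<^esub> b = b"
      using set_add_commute[OF submoduleE(1)[OF sc] submoduleE(1)[OF sb]]
        set_add_submodule_absorb[OF sb sc] by (simp add: c_def)
    then have cb: "graph_reachable (?V - {v}) (lsg_adj R M) c b"
      by (intro lsg_reachable_if_set_add_not_large[OF c b]) (simp add: bnl)
    have dc: "graph_reachable (?V - {v}) (lsg_adj R M) d c"
      using comultiplication_set_add_not_large[OF cm sd sc sv v0 vd vc]
      by (rule lsg_reachable_if_set_add_not_large[OF d c])
    show ?thesis using graph_reachable_trans[OF graph_reachable_trans[OF ad dc] cb] .
  qed
qed

end

theorem theorem2p9:
  fixes R :: "('a, 'c) ring_scheme" and M :: "('a, 'b, 'd) module_scheme"
  assumes "module R M"
    and "carrier M \<noteq> {\<zero>\<^bsub>M\<^esub>}"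
    and "comultiplication_module R M"
    and "graph_nonnull (lsg_vertices R M) (lsg_adj R M)"
    and "graph_connected (lsg_vertices R M) (lsg_adj R M)"
  shows "\<not> (\<exists>N. graph_cut_vertex (lsg_vertices R M) (lsg_adj R M) N)"
proof
  interpret module R M by fact
  assume "\<exists>N. graph_cut_vertex (lsg_vertices R M) (lsg_adj R M) N"
  then obtain v where "\<not> graph_connected (lsg_vertices R M - {v}) (lsg_adj R M)"
    unfolding graph_cut_vertex_def by blast
  moreover have "graph_connected (lsg_vertices R M - {v}) (lsg_adj R M)"
    using assms(5) lsg_bypass[OF assms(3)] by (rule graph_connected_Diff_singleton)
  ultimately show False by contradiction
qed

end
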